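(* Let $n\ge 2$ and let $f:\mathbb{R}^n\to\mathbb{R}^n$ be a Laplacian map. Then, for the system $\dot x=f(x)$, the $\alpha$-limit set and the $\omega$-limit set of any trajectory consist of equilibrium points.
   Context: A real $n\times n$ matrix $L=(l_{ij})$ is a Laplacian matrix if it is symmetric and $l_{ii}=-\sum_{j\neq i} l_{ij}$ for $i=1,\dots,n$. A map $f:\mathbb{R}^n\to\mathbb{R}^n$ of class $C^1$ is a Laplacian map if its Jacobian matrix $Jf(x)$ is a Laplacian matrix for every $x\in\mathbb{R}^n$. *)

theory Defs
  imports "HOL-Analysis.Analysis"
begin

definition laplacian_matrix :: "real^'n^'n \<Rightarrow> bool" where
  "laplacian_matrix L \<longleftrightarrow> transpose L = L \<and>
     (\<forall>i. L $ i $ i = - (\<Sum>j\<in>UNIV - {i}. L $ i $ j))"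

definition laplacian_map :: "(real^'n \<Rightarrow> real^'n) \<Rightarrow> bool" where
  "laplacian_map f \<longleftrightarrow> (\<exists>f'.
     (\<forall>x. (f has_derivative f' x) (at x)) \<and>
     continuous_on UNIV (\<lambda>x. matrix (f' x)) \<and>
     (\<forall>x. laplacian_matrix (matrix (f' x))))"

definition is_trajectory :: "(real^'n \<Rightarrow> real^'n) \<Rightarrow> real set \<Rightarrow> (real \<Rightarrow> real^'n) \<Rightarrow> bool" where
  "is_trajectory f I x \<longleftrightarrow> is_interval I \<and> I \<noteq> {} \<and>
     (\<forall>t\<in>I. (x has_vector_derivative f (x t)) (at t within I))"

text \<open>omega-limit set: limits of x(t_k) with t_k in I, t_k \<rightarrow> +\<infinity>
(empty if I is bounded above); alpha-limit set: same with t_k \<rightarrow> -\<infinity>.\<close>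
definition omega_limit_set :: "real set \<Rightarrow> (real \<Rightarrow> real^'n) \<Rightarrow> (real^'n) set" where
  "omega_limit_set I x = {y. \<exists>s. (\<forall>k. s k \<in> I) \<and> filterlim s at_top sequentially \<and>
       (\<lambda>k. x (s k)) \<longlonglongrightarrow> y}"

definition alpha_limit_set :: "real set \<Rightarrow> (real \<Rightarrow> real^'n) \<Rightarrow> (real^'n) set" where
  "alpha_limit_set I x = {y. \<exists>s. (\<forall>k. s k \<in> I) \<and> filterlim s at_bot sequentially \<and>
       (\<lambda>k. x (s k)) \<longlonglongrightarrow> y}"

end

theory Submission
  imports Defs
begin

(* The Jacobian of f is symmetric, so f is a gradient field: f = grad V for the radial
   potential V z = integral over [0,1] of f (t z) . z dt (the Poincare lemma).  Along a
   trajectory, V (x t) increases at rate |f (x t)|^2.  If y is an omega-limit point, then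
   V (x t) increases to V y.  If f y were nonzero, then |f| >= |f y| / 2 on a ball around y;
   as the trajectory passes arbitrarily close to y at arbitrarily late times and cannot leave
   the ball quickly, V would gain a fixed amount after each such passage, contradicting the
   convergence.  Alpha-limit sets are omega-limit sets of the time-reversed system, which is
   the gradient system of -V. *)

definition radial_potential :: "('a::real_inner \<Rightarrow> 'a) \<Rightarrow> 'a \<Rightarrow> real" where
  "radial_potential f z = integral {0..1} (\<lambda>t. f (t *\<^sub>R z) \<bullet> z)"

lemma has_derivative_radial_integrand:
  fixes f :: "'a::real_inner \<Rightarrow> 'a"
  assumes der: "\<And>p. (f has_derivative f' p) (at p)"
    and self_adjoint: "\<And>p h k. f' p h \<bullet> k = h \<bullet> f' p k"
  shows "((\<lambda>z. f (t *\<^sub>R z) \<bullet> z) has_derivative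
          (\<lambda>h. h \<bullet> (t *\<^sub>R f' (t *\<^sub>R z) z + f (t *\<^sub>R z)))) (at z)"
proof -
  have "((\<lambda>z. f (t *\<^sub>R z)) has_derivative (\<lambda>h. f' (t *\<^sub>R z) (t *\<^sub>R h))) (at z)"
    using has_derivative_compose[OF has_derivative_scaleR_right[OF has_derivative_ident] der]
    by (simp add: o_def)
  then have "((\<lambda>z. f (t *\<^sub>R z) \<bullet> z) has_derivative
              (\<lambda>h. f (t *\<^sub>R z) \<bullet> h + f' (t *\<^sub>R z) (t *\<^sub>R h) \<bullet> z)) (at z)"
    by (rule has_derivative_inner[OF _ has_derivative_ident])
  moreover have "f (t *\<^sub>R z) \<bullet> h + f' (t *\<^sub>R z) (t *\<^sub>R h) \<bullet> z
      = h \<bullet> (t *\<^sub>R f' (t *\<^sub>R z) z + f (t *\<^sub>R z))" for h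
  proof -
    have "f' (t *\<^sub>R z) (t *\<^sub>R h) = t *\<^sub>R f' (t *\<^sub>R z) h"
      using der has_derivative_bounded_linear linear_scale linear_simps(5) by blast
    then show ?thesis
      by (simp add: self_adjoint inner_add_right inner_commute[of _ h])
  qed
  ultimately show ?thesis
    by simp
qed

lemma has_integral_radial_derivative:
  fixes f :: "'a::real_normed_vector \<Rightarrow> 'b::banach"
  assumes der: "\<And>p. (f has_derivative f' p) (at p)"
  shows "((\<lambda>t. t *\<^sub>R f' (t *\<^sub>R z) z + f (t *\<^sub>R z)) has_integral f z) {0..1}"
proof -
  have "((\<lambda>s. s *\<^sub>R f (s *\<^sub>R z)) has_vector_derivative s *\<^sub>R f' (s *\<^sub>R z) z + f (s *\<^sub>R z))
          (at s within {0..1})" for s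
  proof -
    have inner: "((\<lambda>s. f (s *\<^sub>R z)) has_derivative (\<lambda>h. f' (s *\<^sub>R z) (h *\<^sub>R z))) (at s)"
      using has_derivative_compose[OF has_derivative_scaleR_left[OF has_derivative_ident] der]
      by (simp add: o_def)
    have "((\<lambda>s. s *\<^sub>R f (s *\<^sub>R z)) has_derivative
                (\<lambda>h. s *\<^sub>R f' (s *\<^sub>R z) (h *\<^sub>R z) + h *\<^sub>R f (s *\<^sub>R z))) (at s)"
      using has_derivative_scaleR[OF has_derivative_ident inner] by simp
    moreover have "f' (s *\<^sub>R z) (h *\<^sub>R z) = h *\<^sub>R f' (s *\<^sub>R z) z" for h
      using der has_derivative_bounded_linear linear_scale linear_simps(5) by blast
    ultimately show ?thesis
      unfolding has_vector_derivative_def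
      by (auto intro: has_derivative_at_withinI simp: scaleR_add_right mult.commute)
  qed
  then have "((\<lambda>t. t *\<^sub>R f' (t *\<^sub>R z) z + f (t *\<^sub>R z)) has_integral
               1 *\<^sub>R f (1 *\<^sub>R z) - 0 *\<^sub>R f (0 *\<^sub>R z)) {0..1}"
    by (intro fundamental_theorem_of_calculus) auto
  then show ?thesis
    by simp
qed

lemma has_derivative_radial_potential:
  fixes f :: "'a::{real_inner, banach} \<Rightarrow> 'a"
  assumes der: "\<And>p. (f has_derivative f' p) (at p)"
    and cont: "continuous_on UNIV (\<lambda>(p, h). f' p h)"
    and self_adjoint: "\<And>p h k. f' p h \<bullet> k = h \<bullet> f' p k"
  shows "(radial_potential f has_derivative (\<lambda>h. h \<bullet> f z)) (at z)"
proof -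
  define w where "w z t = t *\<^sub>R f' (t *\<^sub>R z) z + f (t *\<^sub>R z)" for z t
  have f_cont: "continuous_on UNIV f"
    by (intro continuous_at_imp_continuous_on ballI has_derivative_continuous[OF der])
  have "continuous_on (UNIV \<times> cbox 0 1) (\<lambda>(z, t). w z t)"
  proof -
    have "continuous_on (UNIV \<times> cbox 0 1) (\<lambda>(z::'a, t::real). (t *\<^sub>R z, z))"
      unfolding case_prod_beta by (intro continuous_intros)
    then have "continuous_on (UNIV \<times> cbox 0 1) (\<lambda>(z, t::real). f' (t *\<^sub>R z) z)"
      using continuous_on_compose2[OF cont] by (fastforce simp: case_prod_beta)
    then show ?thesis
      unfolding w_def case_prod_beta
      by (intro continuous_intros continuous_on_compose2[OF f_cont]) auto
  qed
  then have w_cont: "continuous_on (UNIV \<times> cbox 0 1) (\<lambda>(z, t). blinfun_inner_left (w z t))"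
    unfolding case_prod_beta
    by (rule continuous_on_compose2[OF linear_continuous_on[OF bounded_linear_blinfun_inner_left]]) auto
  have w_integral: "(w z has_integral f z) (cbox 0 1)" for z
    unfolding w_def using has_integral_radial_derivative[OF der] by simp
  have integrable: "(\<lambda>t. f (t *\<^sub>R z) \<bullet> z) integrable_on cbox 0 1" for z
    by (intro integrable_continuous continuous_intros continuous_on_compose2[OF f_cont]) auto
  have "(radial_potential f has_derivative
          blinfun_apply (integral (cbox 0 1) (\<lambda>t. blinfun_inner_left (w z t)))) (at z within UNIV)"
    unfolding radial_potential_def cbox_interval[symmetric]
    by (rule leibniz_rule[where fx="\<lambda>z t. blinfun_inner_left (w z t)"])
      (use has_derivative_radial_integrand[OF der self_adjoint] integrable w_cont
        in \<open>auto simp: w_def\<close>)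
  moreover have "integral (cbox 0 1) (\<lambda>t. blinfun_inner_left (w z t)) = blinfun_inner_left (f z)"
    using integral_linear[OF has_integral_integrable[OF w_integral] bounded_linear_blinfun_inner_left]
      integral_unique[OF w_integral]
    by (simp add: o_def)
  ultimately show ?thesis
    by simp
qed

lemma continuous_on_matrix_vector_mult:
  fixes M :: "'a::topological_space \<Rightarrow> real^'n^'m"
  assumes "continuous_on S M" "continuous_on S v"
  shows "continuous_on S (\<lambda>p. M p *v v p)"
  unfolding matrix_vector_mult_def by (intro continuous_intros assms)

lemma symmetric_matrix_inner_mult:
  fixes A :: "real^'n^'n"
  assumes "transpose A = A"
  shows "(A *v h) \<bullet> k = h \<bullet> (A *v k)"
  by (metis assms dot_lmul_matrix vector_transpose_matrix)

lemma laplacian_map_imp_continuous: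
  "laplacian_map f \<Longrightarrow> continuous_on UNIV f"
  unfolding laplacian_map_def
  by (blast intro: continuous_at_imp_continuous_on has_derivative_continuous)

lemma laplacian_map_has_derivative_radial_potential:
  fixes f :: "real^'n \<Rightarrow> real^'n"
  assumes "laplacian_map f"
  shows "(radial_potential f has_derivative (\<lambda>h. h \<bullet> f z)) (at z)"
proof -
  obtain f' where der: "\<And>p. (f has_derivative f' p) (at p)"
    and cont: "continuous_on UNIV (\<lambda>p. matrix (f' p))"
    and lap: "\<And>p. laplacian_matrix (matrix (f' p))"
    using assms unfolding laplacian_map_def by blast
  define A where "A p = matrix (f' p)" for p
  have f'_eq: "f' p h = A p *v h" for p h
    unfolding A_def
    using fun_cong[OF matrix_vector_mul(3)[OF has_derivative_bounded_linear[OF der]]] by simp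
  show ?thesis
  proof (rule has_derivative_radial_potential[OF der])
    have "continuous_on UNIV (\<lambda>ph::(real^'n) \<times> (real^'n). A (fst ph))"
      using continuous_on_compose2[OF cont continuous_on_fst[OF continuous_on_id]]
      by (simp add: A_def)
    then show "continuous_on UNIV (\<lambda>(p, h). f' p h)"
      unfolding f'_eq case_prod_beta
      by (intro continuous_on_matrix_vector_mult continuous_intros)
    show "f' p h \<bullet> k = h \<bullet> f' p k" for p h k
    proof -
      have "transpose (A p) = A p"
        using lap[of p] unfolding laplacian_matrix_def A_def by blast
      then show ?thesis
        unfolding f'_eq by (rule symmetric_matrix_inner_mult)
    qed
  qed
qed

lemma continuous_nonzero_norm_bounds:
  fixes F :: "'a::metric_space \<Rightarrow> 'b::real_normed_vector"
  assumes "isCont F y" "F y \<noteq> 0"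
  obtains r where "r > 0"
    and "\<And>z. dist z y < r \<Longrightarrow> norm (F y) / 2 \<le> norm (F z) \<and> norm (F z) \<le> 2 * norm (F y)"
proof -
  obtain r where "r > 0" and near: "\<And>z. dist z y < r \<Longrightarrow> dist (F z) (F y) < norm (F y) / 2"
    using assms unfolding continuous_at_eps_delta by (metis half_gt_zero zero_less_norm_iff)
  have "norm (F y) / 2 \<le> norm (F z) \<and> norm (F z) \<le> 2 * norm (F y)" if "dist z y < r" for z
    using near[OF that] norm_triangle_ineq2[of "F z" "F y"] norm_triangle_ineq3[of "F z" "F y"]
    unfolding dist_norm by linarith
  with \<open>r > 0\<close> show ?thesis
    using that by blast
qed

lemma is_trajectory_reverse:
  assumes "is_trajectory F I x"
  shows "is_trajectory (\<lambda>z. - F z) (uminus ` I) (\<lambda>t. x (- t))"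
  unfolding is_trajectory_def
proof (intro conjI ballI)
  show "is_interval (uminus ` I)" "uminus ` I \<noteq> {}"
    using assms unfolding is_trajectory_def by auto
next
  fix t assume "t \<in> uminus ` I"
  then have "(x has_vector_derivative F (x (- t))) (at (- t) within uminus ` uminus ` I)"
    using assms unfolding is_trajectory_def by (auto simp: image_image)
  moreover have "(uminus has_vector_derivative - 1) (at t within uminus ` I)"
    by (auto intro!: derivative_eq_intros)
  ultimately show "((\<lambda>t. x (- t)) has_vector_derivative - F (x (- t))) (at t within uminus ` I)"
    using vector_diff_chain_within by (fastforce simp: o_def)
qed

lemma alpha_limit_set_eq_omega_limit_set_reverse:
  "alpha_limit_set I x = omega_limit_set (uminus ` I) (\<lambda>t. x (- t))"
proof -
  have "(\<exists>s. (\<forall>k. s k \<in> I) \<and> filterlim s at_bot sequentially \<and> (\<lambda>k. x (s k)) \<longlonglongrightarrow> y) \<longleftrightarrow>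
        (\<exists>s. (\<forall>k. s k \<in> uminus ` I) \<and> filterlim s at_top sequentially \<and>
             (\<lambda>k. x (- s k)) \<longlonglongrightarrow> y)" for y
  proof
    assume "\<exists>s. (\<forall>k. s k \<in> I) \<and> filterlim s at_bot sequentially \<and> (\<lambda>k. x (s k)) \<longlonglongrightarrow> y"
    then obtain s where "\<forall>k. s k \<in> I" "filterlim s at_bot sequentially" "(\<lambda>k. x (s k)) \<longlonglongrightarrow> y"
      by blast
    then show "\<exists>s. (\<forall>k. s k \<in> uminus ` I) \<and> filterlim s at_top sequentially \<and>
                   (\<lambda>k. x (- s k)) \<longlonglongrightarrow> y"
      by (intro exI[of _ "\<lambda>k. - s k"]) (auto simp: filterlim_uminus_at_top)
  next
    assume "\<exists>s. (\<forall>k. s k \<in> uminus ` I) \<and> filterlim s at_top sequentially \<and>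
                (\<lambda>k. x (- s k)) \<longlonglongrightarrow> y"
    then obtain s where "\<forall>k. s k \<in> uminus ` I" "filterlim s at_top sequentially"
        "(\<lambda>k. x (- s k)) \<longlonglongrightarrow> y"
      by blast
    moreover have "- s k \<in> I" for k
      using \<open>\<forall>k. s k \<in> uminus ` I\<close> by (metis imageE minus_minus)
    ultimately show "\<exists>s. (\<forall>k. s k \<in> I) \<and> filterlim s at_bot sequentially \<and> (\<lambda>k. x (s k)) \<longlonglongrightarrow> y"
      by (intro exI[of _ "\<lambda>k. - s k"]) (auto simp: filterlim_uminus_at_top)
  qed
  then show ?thesis
    unfolding alpha_limit_set_def omega_limit_set_def by blast
qed

lemma trajectory_atLeastAtMost_subset:
  "is_trajectory F I x \<Longrightarrow> a \<in> I \<Longrightarrow> b \<in> I \<Longrightarrow> {a..b} \<subseteq> I"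
  unfolding is_trajectory_def is_interval_1 by (meson atLeastAtMost_iff subsetI)

lemma trajectory_continuous_on:
  "is_trajectory F I x \<Longrightarrow> continuous_on I x"
  unfolding is_trajectory_def continuous_on_eq_continuous_within
  using has_vector_derivative_continuous by blast

lemma trajectory_displacement_bound:
  assumes traj: "is_trajectory F I x" and "a \<in> I" "b \<in> I" "a \<le> b"
    and bound: "\<And>u. a < u \<Longrightarrow> u < b \<Longrightarrow> norm (F (x u)) \<le> M"
  shows "norm (x b - x a) \<le> M * (b - a)"
proof (cases "a = b")
  case False
  then have "a < b" using \<open>a \<le> b\<close> by simp
  have sub: "{a..b} \<subseteq> I"
    using trajectory_atLeastAtMost_subset[OF traj \<open>a \<in> I\<close> \<open>b \<in> I\<close>] .
  have "(x has_derivative (\<lambda>h. h *\<^sub>R F (x u))) (at u)" if "a < u" "u < b" for u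
  proof -
    have "u \<in> interior I"
      using interior_mono[OF sub] that by (simp add: subset_iff)
    then have "at u within I = at u" and "u \<in> I"
      using at_within_interior interior_subset by blast+
    then show ?thesis
      using traj unfolding is_trajectory_def has_vector_derivative_def by metis
  qed
  with mvt_general[OF \<open>a < b\<close> continuous_on_subset[OF trajectory_continuous_on[OF traj] sub]]
  obtain \<xi> where \<xi>: "a < \<xi>" "\<xi> < b" "norm (x b - x a) \<le> (b - a) * norm (F (x \<xi>))"
    by fastforce
  note \<xi>(3)
  also have "\<dots> \<le> (b - a) * M"
    using \<open>a < b\<close> bound[OF \<xi>(1,2)] by (intro mult_left_mono) auto
  finally show ?thesis
    by (simp add: mult.commute)
qed simp

lemma trajectory_stays_in_ball:
  assumes traj: "is_trajectory F I x" and "a \<in> I" "a + \<tau> \<in> I"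
    and bound: "\<And>z. dist z y < r \<Longrightarrow> norm (F z) \<le> M" and "0 \<le> M"
    and start: "dist (x a) y + M * \<tau> < r"
    and "a \<le> t" "t \<le> a + \<tau>"
  shows "dist (x t) y < r"
proof (rule ccontr)
  assume "\<not> dist (x t) y < r"
  define S where "S = {u \<in> {a..a + \<tau>}. r \<le> dist (x u) y}"
  define t' where "t' = Inf S" \<comment> \<open>the first exit time from the ball\<close>
  have sub: "{a..a + \<tau>} \<subseteq> I"
    using trajectory_atLeastAtMost_subset[OF traj \<open>a \<in> I\<close> \<open>a + \<tau> \<in> I\<close>] .
  have "closed S"
    unfolding S_def using continuous_on_subset[OF trajectory_continuous_on[OF traj] sub]
    by (intro continuous_on_closed_Collect_le continuous_intros) auto
  moreover have "S \<noteq> {}"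
    using \<open>\<not> dist (x t) y < r\<close> \<open>a \<le> t\<close> \<open>t \<le> a + \<tau>\<close> unfolding S_def by auto
  moreover have "bdd_below S"
    unfolding S_def by (rule bdd_belowI[of _ a]) auto
  ultimately have "t' \<in> S"
    unfolding t'_def by (rule closed_contains_Inf[rotated -1])
  have before_exit: "dist (x u) y < r" if "a \<le> u" "u < t'" for u
    using cInf_lower[OF _ \<open>bdd_below S\<close>, of u] that \<open>t' \<in> S\<close>
    unfolding S_def t'_def by force
  have "0 \<le> M * \<tau>"
    using \<open>0 \<le> M\<close> \<open>a \<le> t\<close> \<open>t \<le> a + \<tau>\<close> by simp
  then have "t' \<noteq> a"
    using \<open>t' \<in> S\<close> start unfolding S_def by auto
  then have "a < t'"
    using \<open>t' \<in> S\<close> unfolding S_def by auto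
  then have "norm (x t' - x a) \<le> M * (t' - a)"
    using \<open>t' \<in> S\<close> sub before_exit bound \<open>a \<in> I\<close> unfolding S_def
    by (intro trajectory_displacement_bound[OF traj]) auto
  also have "\<dots> \<le> M * \<tau>"
    using \<open>t' \<in> S\<close> \<open>0 \<le> M\<close> unfolding S_def by (auto intro: mult_left_mono)
  finally have "dist (x t') y < r"
    using start dist_triangle[of "x t'" y "x a"] by (simp add: dist_norm)
  then show False
    using \<open>t' \<in> S\<close> unfolding S_def by simp
qed

lemma gradient_potential_increment:
  assumes grad: "\<And>z. (V has_derivative (\<lambda>h. h \<bullet> F z)) (at z)"
    and traj: "is_trajectory F I x" and "a \<in> I" "b \<in> I" "a < b"
  shows "\<exists>\<xi>\<in>{a<..<b}. V (x b) - V (x a) = (b - a) * (norm (F (x \<xi>)))\<^sup>2"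
proof -
  have sub: "{a..b} \<subseteq> I"
    using trajectory_atLeastAtMost_subset[OF traj \<open>a \<in> I\<close> \<open>b \<in> I\<close>] .
  have deriv: "((\<lambda>t. V (x t)) has_derivative (\<lambda>h. h * (norm (F (x t)))\<^sup>2)) (at t within {a..b})"
    if "a \<le> t" "t \<le> b" for t
  proof -
    have "(x has_derivative (\<lambda>h. h *\<^sub>R F (x t))) (at t within I)"
      using traj sub that unfolding is_trajectory_def has_vector_derivative_def by auto
    from has_derivative_in_compose[OF this has_derivative_at_withinI[OF grad]]
    have "((\<lambda>t. V (x t)) has_derivative (\<lambda>h. h * (norm (F (x t)))\<^sup>2)) (at t within I)"
      by (simp add: o_def power2_norm_eq_inner)
    then show ?thesis
      using has_derivative_subset sub by blast
  qed
  show ?thesis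
    using mvt_simple[OF \<open>a < b\<close> deriv] by (simp add: mult.commute)
qed

lemma gradient_potential_mono:
  assumes grad: "\<And>z. (V has_derivative (\<lambda>h. h \<bullet> F z)) (at z)"
    and traj: "is_trajectory F I x" and "a \<in> I" "b \<in> I" "a \<le> b"
  shows "V (x a) \<le> V (x b)"
proof (cases "a = b")
  case False
  then obtain \<xi> where "V (x b) - V (x a) = (b - a) * (norm (F (x \<xi>)))\<^sup>2"
    using gradient_potential_increment[OF grad traj \<open>a \<in> I\<close> \<open>b \<in> I\<close>] \<open>a \<le> b\<close> by force
  moreover have "0 \<le> (b - a) * (norm (F (x \<xi>)))\<^sup>2"
    using \<open>a \<le> b\<close> by simp
  ultimately show ?thesis
    by simp
qed simp

lemma gradient_potential_gain_in_ball:
  assumes grad: "\<And>z. (V has_derivative (\<lambda>h. h \<bullet> F z)) (at z)"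
    and traj: "is_trajectory F I x" and "a \<in> I" "a + \<tau> \<in> I" "\<tau> > 0"
    and speed: "\<And>z. dist z y < r \<Longrightarrow> c \<le> norm (F z) \<and> norm (F z) \<le> M"
    and start: "dist (x a) y + M * \<tau> < r" and "0 \<le> c" "0 \<le> M"
  shows "\<tau> * c\<^sup>2 \<le> V (x (a + \<tau>)) - V (x a)"
proof -
  obtain \<xi> where "a < \<xi>" "\<xi> < a + \<tau>"
    and increment: "V (x (a + \<tau>)) - V (x a) = \<tau> * (norm (F (x \<xi>)))\<^sup>2"
    using gradient_potential_increment[OF grad traj \<open>a \<in> I\<close> \<open>a + \<tau> \<in> I\<close>] \<open>\<tau> > 0\<close> by auto
  have "dist (x \<xi>) y < r"
    using trajectory_stays_in_ball[OF traj \<open>a \<in> I\<close> \<open>a + \<tau> \<in> I\<close> _ \<open>0 \<le> M\<close> start] speed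
      \<open>a < \<xi>\<close> \<open>\<xi> < a + \<tau>\<close> by auto
  then show ?thesis
    using increment speed \<open>\<tau> > 0\<close> \<open>0 \<le> c\<close> by (simp add: power_mono)
qed

lemma omega_limit_set_imp_atLeast_subset:
  assumes "y \<in> omega_limit_set I x" "is_interval I" "a \<in> I"
  shows "{a..} \<subseteq> I"
proof
  fix b assume "b \<in> {a..}"
  obtain s where s: "\<And>k. s k \<in> I" "filterlim s at_top sequentially"
    using assms(1) unfolding omega_limit_set_def by blast
  then have "eventually (\<lambda>k. b \<le> s k) sequentially"
    by (simp add: filterlim_at_top)
  then obtain k where "b \<le> s k"
    by (metis eventually_sequentially order_refl)
  then show "b \<in> I"
    using \<open>b \<in> {a..}\<close> \<open>a \<in> I\<close> s(1)[of k] \<open>is_interval I\<close>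
    unfolding is_interval_1 by (meson atLeast_iff)
qed

lemma omega_limit_set_approach:
  assumes "y \<in> omega_limit_set I x" "e > 0"
  obtains a where "a \<in> I" "dist (x a) y < e"
proof -
  obtain s where "\<And>k. s k \<in> I" "(\<lambda>k. x (s k)) \<longlonglongrightarrow> y"
    using assms(1) unfolding omega_limit_set_def by blast
  then show ?thesis
    using that \<open>e > 0\<close> unfolding lim_sequentially by (meson order_refl)
qed

lemma gradient_potential_le_omega_limit:
  assumes grad: "\<And>z. (V has_derivative (\<lambda>h. h \<bullet> F z)) (at z)"
    and traj: "is_trajectory F I x" and "y \<in> omega_limit_set I x" "t \<in> I"
  shows "V (x t) \<le> V y"
proof -
  obtain s where s: "\<And>k. s k \<in> I" "filterlim s at_top sequentially" "(\<lambda>k. x (s k)) \<longlonglongrightarrow> y"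
    using \<open>y \<in> omega_limit_set I x\<close> unfolding omega_limit_set_def by blast
  have "(\<lambda>k. V (x (s k))) \<longlonglongrightarrow> V y"
    using isCont_tendsto_compose[OF has_derivative_continuous[OF grad] s(3)] .
  moreover have "\<exists>N. \<forall>k\<ge>N. V (x t) \<le> V (x (s k))"
    using s(2) gradient_potential_mono[OF grad traj \<open>t \<in> I\<close> s(1)]
    unfolding filterlim_at_top eventually_sequentially by blast
  ultimately show ?thesis
    by (rule LIMSEQ_le_const)
qed

lemma omega_limit_gradient_equilibrium:
  assumes grad: "\<And>z. (V has_derivative (\<lambda>h. h \<bullet> F z)) (at z)"
    and cont: "continuous_on UNIV F"
    and traj: "is_trajectory F I x" and y: "y \<in> omega_limit_set I x"
  shows "F y = 0"
proof (rule ccontr)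
  assume "F y \<noteq> 0"
  define c where "c = norm (F y)"
  have "c > 0"
    using \<open>F y \<noteq> 0\<close> by (simp add: c_def)
  have "isCont F y"
    using cont by (simp add: continuous_on_eq_continuous_at)
  then obtain r where "r > 0"
    and speed: "\<And>z. dist z y < r \<Longrightarrow> c / 2 \<le> norm (F z) \<and> norm (F z) \<le> 2 * c"
    using continuous_nonzero_norm_bounds \<open>F y \<noteq> 0\<close> unfolding c_def by blast
  \<comment> \<open>at speed at most 2 c, a trajectory starting in the ball of radius r / 2 stays in the
      ball of radius r for time \<tau>\<close>
  define \<tau> where "\<tau> = r / (4 * c)"
  have "\<tau> > 0"
    using \<open>r > 0\<close> \<open>c > 0\<close> by (simp add: \<tau>_def)
  then have "\<tau> * (c / 2)\<^sup>2 > 0"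
    using \<open>c > 0\<close> by simp
  then obtain \<delta> where "\<delta> > 0" and V_near: "\<And>z. dist z y < \<delta> \<Longrightarrow> dist (V z) (V y) < \<tau> * (c / 2)\<^sup>2"
    using has_derivative_continuous[OF grad] unfolding continuous_at_eps_delta by blast
  obtain a where "a \<in> I" and a_near: "dist (x a) y < min (r / 2) \<delta>"
    using omega_limit_set_approach[OF y] \<open>r > 0\<close> \<open>\<delta> > 0\<close> by (metis half_gt_zero min_less_iff_conj)
  have "a + \<tau> \<in> I"
    using omega_limit_set_imp_atLeast_subset[OF y _ \<open>a \<in> I\<close>] traj \<open>\<tau> > 0\<close>
    unfolding is_trajectory_def by (auto simp: subset_iff)
  have "\<tau> * (c / 2)\<^sup>2 \<le> V (x (a + \<tau>)) - V (x a)"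
    using a_near \<open>c > 0\<close>
    by (intro gradient_potential_gain_in_ball[OF grad traj \<open>a \<in> I\<close> \<open>a + \<tau> \<in> I\<close> \<open>\<tau> > 0\<close> speed])
      (auto simp: \<tau>_def)
  moreover have "V (x (a + \<tau>)) \<le> V y"
    using gradient_potential_le_omega_limit[OF grad traj y \<open>a + \<tau> \<in> I\<close>] .
  ultimately show False
    using V_near[of "x a"] a_near unfolding dist_real_def by linarith
qed

theorem lemma5p1:
  fixes f :: "real^'n \<Rightarrow> real^'n" and x :: "real \<Rightarrow> real^'n" and I :: "real set"
  assumes "CARD('n) \<ge> 2"
    and "laplacian_map f"
    and "is_trajectory f I x"
  shows "(\<forall>y\<in>alpha_limit_set I x. f y = 0) \<and> (\<forall>y\<in>omega_limit_set I x. f y = 0)"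
proof -
  define V where "V = radial_potential f"
  have grad: "\<And>z. (V has_derivative (\<lambda>h. h \<bullet> f z)) (at z)"
    unfolding V_def using laplacian_map_has_derivative_radial_potential[OF assms(2)] .
  have cont: "continuous_on UNIV f"
    using laplacian_map_imp_continuous[OF assms(2)] .
  have "\<forall>y\<in>omega_limit_set I x. f y = 0"
    using omega_limit_gradient_equilibrium[OF grad cont assms(3)] by blast
  moreover have "\<forall>y\<in>omega_limit_set (uminus ` I) (\<lambda>t. x (- t)). - f y = 0"
  proof
    fix y assume y: "y \<in> omega_limit_set (uminus ` I) (\<lambda>t. x (- t))"
    have "((\<lambda>z. - V z) has_derivative (\<lambda>h. h \<bullet> - f z)) (at z)" for z
      using has_derivative_minus[OF grad[of z]] by simp
    then show "- f y = 0"
      using omega_limit_gradient_equilibrium[OF _ continuous_on_minus[OF cont]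
          is_trajectory_reverse[OF assms(3)] y] by blast
  qed
  ultimately show ?thesis
    by (simp add: alpha_limit_set_eq_omega_limit_set_reverse)
qed

end
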